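(* Let $\Phi\in\check{S}_{AB}$ satisfy $\Phi(\overline{\mathfrak{Y}_{\mathfrak{E}_A}},\overline{\mathfrak{Y}_{\mathfrak{E}_B}})=\mathbf{N}$. Then for all $\mathfrak{l}_B\in\mathfrak{E}_B$, $\Phi(\overline{\mathfrak{Y}_{\mathfrak{E}_A}},\mathfrak{l}_B)=\mathbf{N}$, and for all $\mathfrak{l}_A\in\mathfrak{E}_A$, $\Phi(\mathfrak{l}_A,\overline{\mathfrak{Y}_{\mathfrak{E}_B}})=\mathbf{N}$.
   Context: $\mathfrak{B}=\{\mathbf{Y},\mathbf{N},\bot\}$ with $\bot$ below the incomparable $\mathbf{Y},\mathbf{N}$, meet $\wedge$ and involution $\overline{\cdot}$ exchanging $\mathbf{Y},\mathbf{N}$. $(\mathfrak{S}_A,\mathfrak{E}_A,\epsilon^{\mathfrak{S}_A})$, $(\mathfrak{S}_B,\mathfrak{E}_B,\epsilon^{\mathfrak{S}_B})$ are States/Effects Chu spaces; each effect space is a down-complete Inf semi-lattice (infima $\inf$) with negation $\mathfrak{l}\mapsto\overline{\mathfrak{l}}$, a constant-$\mathbf{Y}$ effect $\mathfrak{Y}_{\mathfrak{E}}$ and a bottom effect $\bot_{\mathfrak{E}}$ with $\mathfrak{l}\sqcap\overline{\mathfrak{l}}=\bot_{\mathfrak{E}}$. $\check{S}_{AB}$ is the maximal tensor product: maps $\Phi:\mathfrak{E}_A\times\mathfrak{E}_B\to\mathfrak{B}$ with $\Phi(\inf^{\mathfrak{E}_A}_i\mathfrak{l}_{i,A},\mathfrak{l}_B)=\bigwedge_i\Phi(\mathfrak{l}_{i,A},\mathfrak{l}_B)$,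 $\Phi(\mathfrak{l}_A,\inf^{\mathfrak{E}_B}_j\mathfrak{l}_{j,B})=\bigwedge_j\Phi(\mathfrak{l}_A,\mathfrak{l}_{j,B})$, $\Phi(\overline{\mathfrak{l}_A},\mathfrak{Y}_{\mathfrak{E}_B})=\overline{\Phi(\mathfrak{l}_A,\mathfrak{Y}_{\mathfrak{E}_B})}$, $\Phi(\mathfrak{Y}_{\mathfrak{E}_A},\overline{\mathfrak{l}_B})=\overline{\Phi(\mathfrak{Y}_{\mathfrak{E}_A},\mathfrak{l}_B)}$, $\Phi(\mathfrak{Y}_{\mathfrak{E}_A},\mathfrak{Y}_{\mathfrak{E}_B})=\mathbf{Y}$. *)

theory Defs
  imports Main
begin

text \<open>The three-valued boolean lattice B = {Y, N, bottom}: bottom is below the two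
incomparable elements Y and N.\<close>
datatype bval = Yb | Nb | Botb

fun bneg :: "bval \<Rightarrow> bval" where
  "bneg Yb = Nb" | "bneg Nb = Yb" | "bneg Botb = Botb"

definition ble :: "bval \<Rightarrow> bval \<Rightarrow> bool" where
  "ble x y \<longleftrightarrow> x = Botb \<or> x = y"

definition bInf :: "bval set \<Rightarrow> bval" where
  "bInf S = (if S \<noteq> {} \<and> (\<forall>x\<in>S. x = Yb) then Yb
             else if S \<noteq> {} \<and> (\<forall>x\<in>S. x = Nb) then Nb else Botb)"

definition is_inf :: "('e \<Rightarrow> 'e \<Rightarrow> bool) \<Rightarrow> 'e set \<Rightarrow> 'e \<Rightarrow> bool" where
  "is_inf le S x \<longleftrightarrow> (\<forall>y\<in>S. le x y) \<and> (\<forall>z. (\<forall>y\<in>S. le z y) \<longrightarrow> le z x)"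

text \<open>A States/Effects Chu space (S, E, eval) whose effect space E is a down-complete
Inf semi-lattice (order le, infimum Inf of every nonempty family), with negation neg,
constant-Y effect Yeff and bottom effect boteff satisfying l \<sqinter> neg l = boteff.\<close>
definition chu_effect_space ::
  "('s \<Rightarrow> 'e \<Rightarrow> bval) \<Rightarrow> ('e \<Rightarrow> 'e \<Rightarrow> bool) \<Rightarrow> ('e set \<Rightarrow> 'e) \<Rightarrow> ('e \<Rightarrow> 'e) \<Rightarrow> 'e \<Rightarrow> 'e \<Rightarrow> bool"
  where
  "chu_effect_space eval le infE neg Yeff boteff \<longleftrightarrow>
     (\<forall>x. le x x) \<and> (\<forall>x y z. le x y \<longrightarrow> le y z \<longrightarrow> le x z) \<and>
     (\<forall>x y. le x y \<longrightarrow> le y x \<longrightarrow> x = y) \<and>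
     (\<forall>S. S \<noteq> {} \<longrightarrow> is_inf le S (infE S)) \<and>
     (\<forall>S s. S \<noteq> {} \<longrightarrow> eval s (infE S) = bInf (eval s ` S)) \<and>
     (\<forall>l. neg (neg l) = l) \<and>
     (\<forall>s l. eval s (neg l) = bneg (eval s l)) \<and>
     (\<forall>s. eval s Yeff = Yb) \<and>
     (\<forall>l. le boteff l) \<and>
     (\<forall>l. infE {l, neg l} = boteff)"

definition max_tensor ::
  "('a set \<Rightarrow> 'a) \<Rightarrow> ('a \<Rightarrow> 'a) \<Rightarrow> 'a \<Rightarrow> ('b set \<Rightarrow> 'b) \<Rightarrow> ('b \<Rightarrow> 'b) \<Rightarrow> 'b
    \<Rightarrow> ('a \<Rightarrow> 'b \<Rightarrow> bval) \<Rightarrow> bool" where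
  "max_tensor InfA negA YA InfB negB YB Phi \<longleftrightarrow>
     (\<forall>S lB. S \<noteq> {} \<longrightarrow> Phi (InfA S) lB = bInf ((\<lambda>lA. Phi lA lB) ` S)) \<and>
     (\<forall>lA S. S \<noteq> {} \<longrightarrow> Phi lA (InfB S) = bInf ((\<lambda>lB. Phi lA lB) ` S)) \<and>
     (\<forall>lA. Phi (negA lA) YB = bneg (Phi lA YB)) \<and>
     (\<forall>lB. Phi YA (negB lB) = bneg (Phi YA lB)) \<and>
     Phi YA YB = Yb"

end

theory Submission
  imports Defs
begin

text \<open>Since the bottom effect is the infimum of any complementary pair and the meet in B
is N only if both arguments are N, Phi(l_A, bottom) = N as soon as Phi(l_A, -) is N on one
complementary pair; as bottom is also the infimum of itself with any effect, Phi(l_A, -)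
is then N everywhere. For l_A = neg Y_A the pair Y_B, neg Y_B works, because
Phi(neg Y_A, Y_B) is the negation of Phi(Y_A, Y_B) = Y. The second claim follows by
exchanging the roles of A and B.\<close>

lemma bInf_pair_eq_Nb_iff: "bInf {x, y} = Nb \<longleftrightarrow> x = Nb \<and> y = Nb"
  by (cases x; cases y) (simp_all add: bInf_def)

lemma chu_effect_space_Inf_bot_pair:
  assumes "chu_effect_space eval le infE neg Y botE"
  shows "infE {botE, l} = botE"
proof -
  have inf: "is_inf le {botE, l} (infE {botE, l})"
    and botE_least: "\<And>x. le botE x"
    and antisym: "\<And>x y. le x y \<Longrightarrow> le y x \<Longrightarrow> x = y"
    using assms unfolding chu_effect_space_def by simp_all
  have "le (infE {botE, l}) botE" using inf unfolding is_inf_def by simp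
  moreover have "le botE (infE {botE, l})" using inf botE_least unfolding is_inf_def by blast
  ultimately show ?thesis by (rule antisym)
qed

lemma max_tensor_swap:
  "max_tensor InfA negA YA InfB negB YB Phi \<Longrightarrow>
   max_tensor InfB negB YB InfA negA YA (\<lambda>lB lA. Phi lA lB)"
  unfolding max_tensor_def by simp

lemma max_tensor_negY_Y:
  "max_tensor InfA negA YA InfB negB YB Phi \<Longrightarrow> Phi (negA YA) YB = Nb"
  unfolding max_tensor_def by simp

lemma max_tensor_Nb_if_Nb_on_complementary_pair:
  assumes B: "chu_effect_space evalB leB InfB negB YB botB"
    and Phi: "max_tensor InfA negA YA InfB negB YB Phi"
    and "Phi lA l = Nb" and "Phi lA (negB l) = Nb"
  shows "Phi lA lB = Nb"
proof -
  have Inf_right: "\<And>S. S \<noteq> {} \<Longrightarrow> Phi lA (InfB S) = bInf ((\<lambda>lB. Phi lA lB) ` S)"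
    using Phi unfolding max_tensor_def by simp
  have "InfB {l, negB l} = botB"
    using B unfolding chu_effect_space_def by simp
  then have "Phi lA botB = Nb"
    using Inf_right[of "{l, negB l}"] assms(3,4) by (simp add: bInf_def)
  moreover have "Phi lA botB = bInf {Phi lA botB, Phi lA lB}"
    using Inf_right[of "{botB, lB}"] chu_effect_space_Inf_bot_pair[OF B] by simp
  ultimately have "bInf {Phi lA botB, Phi lA lB} = Nb" by metis
  then show ?thesis by (simp add: bInf_pair_eq_Nb_iff)
qed

theorem mainTheorem16:
  fixes evalA :: "'sA \<Rightarrow> 'eA \<Rightarrow> bval" and leA :: "'eA \<Rightarrow> 'eA \<Rightarrow> bool"
    and InfA :: "'eA set \<Rightarrow> 'eA" and negA :: "'eA \<Rightarrow> 'eA" and YA botA :: 'eA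
    and evalB :: "'sB \<Rightarrow> 'eB \<Rightarrow> bval" and leB :: "'eB \<Rightarrow> 'eB \<Rightarrow> bool"
    and InfB :: "'eB set \<Rightarrow> 'eB" and negB :: "'eB \<Rightarrow> 'eB" and YB botB :: 'eB
    and Phi :: "'eA \<Rightarrow> 'eB \<Rightarrow> bval"
  assumes "chu_effect_space evalA leA InfA negA YA botA"
    and "chu_effect_space evalB leB InfB negB YB botB"
    and "max_tensor InfA negA YA InfB negB YB Phi"
    and "Phi (negA YA) (negB YB) = Nb"
  shows "(\<forall>lB. Phi (negA YA) lB = Nb) \<and> (\<forall>lA. Phi lA (negB YB) = Nb)"
proof (intro conjI allI)
  fix lB
  show "Phi (negA YA) lB = Nb"
    using max_tensor_Nb_if_Nb_on_complementary_pair[OF assms(2,3)]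
      max_tensor_negY_Y[OF assms(3)] assms(4) by blast
next
  fix lA
  note Phi_swap = max_tensor_swap[OF assms(3)]
  show "Phi lA (negB YB) = Nb"
    using max_tensor_Nb_if_Nb_on_complementary_pair[OF assms(1) Phi_swap]
      max_tensor_negY_Y[OF Phi_swap] assms(4) by blast
qed

end
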